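(* Let $\mathbb{X}=(X,\tau_{\mathbb{X}})$ be a $T_0$ topological space and $\Omega_0$ a viable base of $\mathbb{X}$. Then the spectral compactification $\widehat{\mathbb{X}}_{\Omega_0}$ is a core-compact space, and the map $\iota:X\to\widehat{X}$, $\iota(x)=\{I\in\mathrm{Idl}(\Omega_0): x\in\bigcup I\}$, is a dense topological embedding (continuous, injective, relatively open, with dense image). That is, $\widehat{\mathbb{X}}_{\Omega_0}$ is a core-compactification of $\mathbb{X}$.
   Context: A viable base of $\mathbb{X}$ is a family $\Omega_0\subseteq\tau_{\mathbb{X}}$ closed under finite unions and finite intersections (so $\emptyset,X\in\Omega_0$) which is a base of $\tau_{\mathbb{X}}$. $\mathrm{Idl}(\Omega_0)$ is the set of ideals (nonempty, downward closed, directed subsets) of $(\Omega_0,\subseteq)$, ordered by inclusion; it is a complete lattice. A completely prime filter of a complete lattice $L$ is a nonempty upward closed $F\subseteq L$ closed under binary meets such that whenever $\bigvee A\in F$ for $A\subseteq L$ then $A\cap F\neq\emptyset$. $\widehat{\mathbb{X}}_{\Omega_0}$ is the set $\widehat{X}$ of completely prime filters of $\mathrm{Idl}(\Omega_0)$ with the (hull-kernel) topology whose open sets are exactly $\mathcal{O}_I=\{y\in\widehat{X}: I\in y\}$, $I\in\mathrm{Idl}(\Omega_0)$. A space is core-compact if its lattice of open sets under inclusion is a continuous lattice. A core-compactification of $\mathbb{X}$ is a core-compact space into which $\mathbb{X}$ embeds as a dense subspace. *)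

theory Defs
  imports "HOL-Analysis.Analysis"
begin

definition viable_base :: "'a topology \<Rightarrow> 'a set set \<Rightarrow> bool" where
  "viable_base X \<Omega> \<longleftrightarrow>
     (\<forall>U\<in>\<Omega>. openin X U) \<and> {} \<in> \<Omega> \<and> topspace X \<in> \<Omega> \<and>
     (\<forall>U\<in>\<Omega>. \<forall>V\<in>\<Omega>. U \<union> V \<in> \<Omega> \<and> U \<inter> V \<in> \<Omega>) \<and>
     (\<forall>W. openin X W \<longrightarrow> (\<exists>\<U>. \<U> \<subseteq> \<Omega> \<and> W = \<Union>\<U>))"

definition Idl :: "'a set set \<Rightarrow> 'a set set set" where
  "Idl \<Omega> = {I. I \<subseteq> \<Omega> \<and> I \<noteq> {} \<and>
     (\<forall>U\<in>I. \<forall>V\<in>\<Omega>. V \<subseteq> U \<longrightarrow> V \<in> I) \<and>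
     (\<forall>U\<in>I. \<forall>V\<in>I. \<exists>W\<in>I. U \<subseteq> W \<and> V \<subseteq> W)}"

definition is_lub :: "'b set set \<Rightarrow> 'b set set \<Rightarrow> 'b set \<Rightarrow> bool" where
  "is_lub L A J \<longleftrightarrow> J \<in> L \<and> (\<forall>I\<in>A. I \<subseteq> J) \<and>
     (\<forall>K\<in>L. (\<forall>I\<in>A. I \<subseteq> K) \<longrightarrow> J \<subseteq> K)"

definition is_glb :: "'b set set \<Rightarrow> 'b set set \<Rightarrow> 'b set \<Rightarrow> bool" where
  "is_glb L A J \<longleftrightarrow> J \<in> L \<and> (\<forall>I\<in>A. J \<subseteq> I) \<and>
     (\<forall>K\<in>L. (\<forall>I\<in>A. K \<subseteq> I) \<longrightarrow> K \<subseteq> J)"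

definition completely_prime_filter :: "'b set set \<Rightarrow> 'b set set \<Rightarrow> bool" where
  "completely_prime_filter L F \<longleftrightarrow>
     F \<subseteq> L \<and> F \<noteq> {} \<and>
     (\<forall>I\<in>F. \<forall>J\<in>L. I \<subseteq> J \<longrightarrow> J \<in> F) \<and>
     (\<forall>I\<in>F. \<forall>J\<in>F. \<forall>K. is_glb L {I, J} K \<longrightarrow> K \<in> F) \<and>
     (\<forall>A J. A \<subseteq> L \<longrightarrow> is_lub L A J \<longrightarrow> J \<in> F \<longrightarrow> A \<inter> F \<noteq> {})"

definition spec_points :: "'a set set \<Rightarrow> 'a set set set set" where
  "spec_points \<Omega> = {F. completely_prime_filter (Idl \<Omega>) F}"

definition spec_compactification :: "'a set set \<Rightarrow> 'a set set set topology" where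
  "spec_compactification \<Omega> =
     topology (\<lambda>U. \<exists>I\<in>Idl \<Omega>. U = {y \<in> spec_points \<Omega>. I \<in> y})"

definition iota :: "'a set set \<Rightarrow> 'a \<Rightarrow> 'a set set set" where
  "iota \<Omega> x = {I \<in> Idl \<Omega>. x \<in> \<Union>I}"

definition way_below_open :: "'b topology \<Rightarrow> 'b set \<Rightarrow> 'b set \<Rightarrow> bool" where
  "way_below_open Y U V \<longleftrightarrow>
     (\<forall>\<D>. (\<forall>D\<in>\<D>. openin Y D) \<and> \<D> \<noteq> {} \<and>
           (\<forall>D1\<in>\<D>. \<forall>D2\<in>\<D>. \<exists>D3\<in>\<D>. D1 \<subseteq> D3 \<and> D2 \<subseteq> D3) \<and>
           V \<subseteq> \<Union>\<D> \<longrightarrow> (\<exists>D\<in>\<D>. U \<subseteq> D))"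

definition core_compact :: "'b topology \<Rightarrow> bool" where
  "core_compact Y \<longleftrightarrow>
     (\<forall>V. openin Y V \<longrightarrow> V = \<Union>{U. openin Y U \<and> way_below_open Y U V})"

end

theory Submission
  imports Defs
begin

text \<open>
  The open sets of the spectral space are exactly the sets \<open>O\<^sub>I\<close>, and \<open>I \<mapsto> O\<^sub>I\<close> turns
  intersections and joins of ideals into intersections and unions. The heart of the matter is
  that \<open>O\<^sub>I\<close> is compact for the principal ideal \<open>I = \<down>U\<close> of \<open>U \<in> \<Omega>\<close>: if \<open>O\<^sub>\<down>\<^sub>U \<subseteq> O\<^sub>J\<close> but
  \<open>U \<notin> J\<close>, Zorn's lemma gives an ideal \<open>M \<supseteq> J\<close> maximal with \<open>U \<notin> M\<close>; such an \<open>M\<close> is prime,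
  so the ideals not contained in \<open>M\<close> form a completely prime filter lying in \<open>O\<^sub>\<down>\<^sub>U\<close> but not in
  \<open>O\<^sub>J\<close>. Since \<open>O\<^sub>I\<close> is the union of the \<open>O\<^sub>\<down>\<^sub>U\<close> with \<open>U \<in> I\<close>, the compact open sets form a
  base, and a space with such a base is core-compact. For the embedding,
  \<open>\<iota>\<^sup>-\<^sup>1(O\<^sub>I) = \<Union>I\<close> and \<open>\<iota>(W) = O\<^sub>\<down>\<^sub>W \<inter> \<iota>(X)\<close>; the \<open>T\<^sub>0\<close> axiom gives injectivity, and \<open>\<iota>(X)\<close> is
  dense because \<open>\<Union>I\<close> is nonempty whenever \<open>O\<^sub>I\<close> is.
\<close>

section \<open>Ideals of a lattice of sets\<close>

definition lattice_of_sets :: "'a set set \<Rightarrow> bool" where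
  "lattice_of_sets \<Omega> \<longleftrightarrow> {} \<in> \<Omega> \<and> (\<forall>U\<in>\<Omega>. \<forall>V\<in>\<Omega>. U \<union> V \<in> \<Omega> \<and> U \<inter> V \<in> \<Omega>)"

definition principal_ideal :: "'a set set \<Rightarrow> 'a set \<Rightarrow> 'a set set" where
  "principal_ideal \<Omega> U = {V \<in> \<Omega>. V \<subseteq> U}"

definition ideal_join :: "'a set set \<Rightarrow> 'a set set set \<Rightarrow> 'a set set" where
  "ideal_join \<Omega> \<A> = {V \<in> \<Omega>. \<exists>F. finite F \<and> F \<subseteq> \<Union>\<A> \<and> V \<subseteq> \<Union>F}"

lemma lattice_of_setsD:
  assumes "lattice_of_sets \<Omega>"
  shows "{} \<in> \<Omega>" "U \<in> \<Omega> \<Longrightarrow> V \<in> \<Omega> \<Longrightarrow> U \<union> V \<in> \<Omega>" "U \<in> \<Omega> \<Longrightarrow> V \<in> \<Omega> \<Longrightarrow> U \<inter> V \<in> \<Omega>"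
  using assms unfolding lattice_of_sets_def by simp_all

lemma viable_base_imp_lattice_of_sets: "viable_base X \<Omega> \<Longrightarrow> lattice_of_sets \<Omega>"
  unfolding viable_base_def lattice_of_sets_def by simp

lemma IdlI:
  assumes "I \<subseteq> \<Omega>" "I \<noteq> {}" "\<And>U V. U \<in> I \<Longrightarrow> V \<in> \<Omega> \<Longrightarrow> V \<subseteq> U \<Longrightarrow> V \<in> I"
    "\<And>U V. U \<in> I \<Longrightarrow> V \<in> I \<Longrightarrow> \<exists>W\<in>I. U \<subseteq> W \<and> V \<subseteq> W"
  shows "I \<in> Idl \<Omega>"
  using assms unfolding Idl_def by blast

lemma IdlD:
  assumes "I \<in> Idl \<Omega>"
  shows "I \<subseteq> \<Omega>" "I \<noteq> {}" "U \<in> I \<Longrightarrow> V \<in> \<Omega> \<Longrightarrow> V \<subseteq> U \<Longrightarrow> V \<in> I"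
    "U \<in> I \<Longrightarrow> V \<in> I \<Longrightarrow> \<exists>W\<in>I. U \<subseteq> W \<and> V \<subseteq> W"
  using assms unfolding Idl_def by simp_all

lemma Idl_empty_mem:
  assumes "lattice_of_sets \<Omega>" "I \<in> Idl \<Omega>"
  shows "{} \<in> I"
proof -
  obtain U where "U \<in> I"
    using IdlD(2)[OF assms(2)] by blast
  then show ?thesis
    using IdlD(3)[OF assms(2)] lattice_of_setsD(1)[OF assms(1)] by blast
qed

lemma Idl_Un_mem:
  assumes "lattice_of_sets \<Omega>" "I \<in> Idl \<Omega>" "U \<in> I" "V \<in> I"
  shows "U \<union> V \<in> I"
proof -
  obtain W where W: "W \<in> I" "U \<subseteq> W" "V \<subseteq> W"
    using IdlD(4)[OF assms(2-4)] by blast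
  have "U \<union> V \<in> \<Omega>"
    using IdlD(1)[OF assms(2)] assms(3,4) by (blast intro: lattice_of_setsD(2)[OF assms(1)])
  then show ?thesis
    using IdlD(3)[OF assms(2) W(1)] W(2,3) by blast
qed

lemma Idl_finite_Union_mem:
  assumes "lattice_of_sets \<Omega>" "I \<in> Idl \<Omega>" "finite F" "F \<subseteq> I"
  shows "\<Union>F \<in> I"
  using assms(3,4)
  by (induction F rule: finite_induct) (simp_all add: Idl_empty_mem[OF assms(1,2)] Idl_Un_mem[OF assms(1,2)])

lemma Idl_top:
  assumes "lattice_of_sets \<Omega>"
  shows "\<Omega> \<in> Idl \<Omega>"
proof (rule IdlI)
  show "\<exists>W\<in>\<Omega>. U \<subseteq> W \<and> V \<subseteq> W" if "U \<in> \<Omega>" "V \<in> \<Omega>" for U V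
    using lattice_of_setsD(2)[OF assms that] by blast
qed (use lattice_of_setsD(1)[OF assms] in auto)

lemma principal_ideal_Idl:
  assumes "lattice_of_sets \<Omega>"
  shows "principal_ideal \<Omega> U \<in> Idl \<Omega>"
  unfolding principal_ideal_def
proof (rule IdlI)
  show "\<exists>W\<in>{V \<in> \<Omega>. V \<subseteq> U}. V1 \<subseteq> W \<and> V2 \<subseteq> W"
    if "V1 \<in> {V \<in> \<Omega>. V \<subseteq> U}" "V2 \<in> {V \<in> \<Omega>. V \<subseteq> U}" for V1 V2
    using that lattice_of_setsD(2)[OF assms, of V1 V2] by blast
qed (use lattice_of_setsD(1)[OF assms] in auto)

lemma principal_ideal_subset: "I \<in> Idl \<Omega> \<Longrightarrow> U \<in> I \<Longrightarrow> principal_ideal \<Omega> U \<subseteq> I"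
  unfolding principal_ideal_def by (blast intro: IdlD(3))

lemma Idl_Int:
  assumes "lattice_of_sets \<Omega>" "I \<in> Idl \<Omega>" "J \<in> Idl \<Omega>"
  shows "I \<inter> J \<in> Idl \<Omega>"
proof (rule IdlI)
  show "I \<inter> J \<subseteq> \<Omega>"
    using IdlD(1)[OF assms(2)] by blast
  show "I \<inter> J \<noteq> {}"
    using Idl_empty_mem[OF assms(1,2)] Idl_empty_mem[OF assms(1,3)] by blast
  show "V \<in> I \<inter> J" if "U \<in> I \<inter> J" "V \<in> \<Omega>" "V \<subseteq> U" for U V
    using IdlD(3)[OF assms(2), of U V] IdlD(3)[OF assms(3), of U V] that by blast
  show "\<exists>W\<in>I \<inter> J. U \<subseteq> W \<and> V \<subseteq> W" if "U \<in> I \<inter> J" "V \<in> I \<inter> J" for U V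
    using Idl_Un_mem[OF assms(1,2), of U V] Idl_Un_mem[OF assms(1,3), of U V] that by blast
qed

lemma is_glb_Int: "lattice_of_sets \<Omega> \<Longrightarrow> I \<in> Idl \<Omega> \<Longrightarrow> J \<in> Idl \<Omega> \<Longrightarrow> is_glb (Idl \<Omega>) {I, J} (I \<inter> J)"
  unfolding is_glb_def using Idl_Int by blast

lemma ideal_joinI: "V \<in> \<Omega> \<Longrightarrow> finite F \<Longrightarrow> F \<subseteq> \<Union>\<A> \<Longrightarrow> V \<subseteq> \<Union>F \<Longrightarrow> V \<in> ideal_join \<Omega> \<A>"
  unfolding ideal_join_def by blast

lemma ideal_joinE:
  assumes "V \<in> ideal_join \<Omega> \<A>"
  obtains F where "V \<in> \<Omega>" "finite F" "F \<subseteq> \<Union>\<A>" "V \<subseteq> \<Union>F"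
  using assms unfolding ideal_join_def by blast

lemma ideal_join_Idl:
  assumes "lattice_of_sets \<Omega>"
  shows "ideal_join \<Omega> \<A> \<in> Idl \<Omega>"
proof (rule IdlI)
  show "ideal_join \<Omega> \<A> \<subseteq> \<Omega>"
    unfolding ideal_join_def by blast
  show "ideal_join \<Omega> \<A> \<noteq> {}"
    using ideal_joinI[OF lattice_of_setsD(1)[OF assms], of "{}"] by blast
  show "V \<in> ideal_join \<Omega> \<A>" if "U \<in> ideal_join \<Omega> \<A>" "V \<in> \<Omega>" "V \<subseteq> U" for U V
    using that unfolding ideal_join_def by blast
  show "\<exists>W\<in>ideal_join \<Omega> \<A>. U \<subseteq> W \<and> V \<subseteq> W"
    if UV: "U \<in> ideal_join \<Omega> \<A>" "V \<in> ideal_join \<Omega> \<A>" for U V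
  proof -
    obtain F where F: "U \<in> \<Omega>" "finite F" "F \<subseteq> \<Union>\<A>" "U \<subseteq> \<Union>F"
      using UV(1) by (rule ideal_joinE)
    obtain G where G: "V \<in> \<Omega>" "finite G" "G \<subseteq> \<Union>\<A>" "V \<subseteq> \<Union>G"
      using UV(2) by (rule ideal_joinE)
    have "U \<union> V \<in> ideal_join \<Omega> \<A>"
    proof (rule ideal_joinI[where F = "F \<union> G"])
      show "U \<union> V \<in> \<Omega>" by (rule lattice_of_setsD(2)[OF assms F(1) G(1)])
    qed (use F G in auto)
    then show ?thesis by blast
  qed
qed

lemma ideal_join_upper: "I \<in> \<A> \<Longrightarrow> \<A> \<subseteq> Idl \<Omega> \<Longrightarrow> I \<subseteq> ideal_join \<Omega> \<A>"
  using ideal_joinI[of _ \<Omega> "{_}"] IdlD(1) by blast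

lemma ideal_join_least:
  assumes "lattice_of_sets \<Omega>" "K \<in> Idl \<Omega>" "\<And>I. I \<in> \<A> \<Longrightarrow> I \<subseteq> K"
  shows "ideal_join \<Omega> \<A> \<subseteq> K"
proof
  fix V assume "V \<in> ideal_join \<Omega> \<A>"
  then obtain F where F: "V \<in> \<Omega>" "finite F" "F \<subseteq> \<Union>\<A>" "V \<subseteq> \<Union>F"
    by (rule ideal_joinE)
  have "F \<subseteq> K"
    using F(3) assms(3) by fastforce
  then have "\<Union>F \<in> K"
    using Idl_finite_Union_mem[OF assms(1,2) F(2)] by blast
  then show "V \<in> K"
    using IdlD(3)[OF assms(2)] F(1,4) by blast
qed

lemma is_lub_ideal_join: "lattice_of_sets \<Omega> \<Longrightarrow> \<A> \<subseteq> Idl \<Omega> \<Longrightarrow> is_lub (Idl \<Omega>) \<A> (ideal_join \<Omega> \<A>)"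
  unfolding is_lub_def using ideal_join_Idl ideal_join_upper ideal_join_least by metis

lemma ideal_join_finite_subfamily:
  assumes "V \<in> ideal_join \<Omega> \<A>"
  obtains \<A>' where "finite \<A>'" "\<A>' \<subseteq> \<A>" "V \<in> ideal_join \<Omega> \<A>'"
proof -
  obtain F where F: "V \<in> \<Omega>" "finite F" "F \<subseteq> \<Union>\<A>" "V \<subseteq> \<Union>F"
    using assms by (rule ideal_joinE)
  have "\<forall>f\<in>F. \<exists>I. I \<in> \<A> \<and> f \<in> I"
    using F(3) by blast
  then obtain K where K: "\<forall>f\<in>F. K f \<in> \<A> \<and> f \<in> K f"
    by (rule bchoice[THEN exE])
  have "V \<in> ideal_join \<Omega> (K ` F)"
    using K by (intro ideal_joinI[OF F(1,2) _ F(4)]) blast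
  moreover have "K ` F \<subseteq> \<A>"
    using K by auto
  ultimately show ?thesis
    using F(2) by (intro that[of "K ` F"]) simp_all
qed

section \<open>Points and open sets of the spectral space\<close>

definition spec_open :: "'a set set \<Rightarrow> 'a set set \<Rightarrow> 'a set set set set" where
  "spec_open \<Omega> I = {y \<in> spec_points \<Omega>. I \<in> y}"

lemma spec_pointsD:
  assumes "y \<in> spec_points \<Omega>"
  shows "y \<subseteq> Idl \<Omega>" "y \<noteq> {}" "I \<in> y \<Longrightarrow> J \<in> Idl \<Omega> \<Longrightarrow> I \<subseteq> J \<Longrightarrow> J \<in> y"
    "I \<in> y \<Longrightarrow> J \<in> y \<Longrightarrow> is_glb (Idl \<Omega>) {I, J} K \<Longrightarrow> K \<in> y"
    "\<A> \<subseteq> Idl \<Omega> \<Longrightarrow> is_lub (Idl \<Omega>) \<A> J \<Longrightarrow> J \<in> y \<Longrightarrow> \<A> \<inter> y \<noteq> {}"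
proof -
  note cpf = assms[unfolded spec_points_def mem_Collect_eq completely_prime_filter_def]
  show "y \<subseteq> Idl \<Omega>" "y \<noteq> {}"
    using cpf by simp_all
  show "I \<in> y \<Longrightarrow> J \<in> Idl \<Omega> \<Longrightarrow> I \<subseteq> J \<Longrightarrow> J \<in> y"
    using cpf by meson
  show "I \<in> y \<Longrightarrow> J \<in> y \<Longrightarrow> is_glb (Idl \<Omega>) {I, J} K \<Longrightarrow> K \<in> y"
    using cpf by meson
  show "\<A> \<subseteq> Idl \<Omega> \<Longrightarrow> is_lub (Idl \<Omega>) \<A> J \<Longrightarrow> J \<in> y \<Longrightarrow> \<A> \<inter> y \<noteq> {}"
    using cpf by meson
qed

lemma is_lub_unique: "is_lub L \<A> J \<Longrightarrow> is_lub L \<A> J' \<Longrightarrow> J = J'"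
  unfolding is_lub_def by (meson subset_antisym)

lemma is_glb_unique: "is_glb L \<A> J \<Longrightarrow> is_glb L \<A> J' \<Longrightarrow> J = J'"
  unfolding is_glb_def by (meson subset_antisym)

lemma spec_pointsI:
  assumes L: "lattice_of_sets \<Omega>" and y: "y \<subseteq> Idl \<Omega>" "y \<noteq> {}"
    and up: "\<And>I J. I \<in> y \<Longrightarrow> J \<in> Idl \<Omega> \<Longrightarrow> I \<subseteq> J \<Longrightarrow> J \<in> y"
    and Int: "\<And>I J. I \<in> y \<Longrightarrow> J \<in> y \<Longrightarrow> I \<inter> J \<in> y"
    and join: "\<And>\<A>. \<A> \<subseteq> Idl \<Omega> \<Longrightarrow> ideal_join \<Omega> \<A> \<in> y \<Longrightarrow> \<A> \<inter> y \<noteq> {}"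
  shows "y \<in> spec_points \<Omega>"
  unfolding spec_points_def mem_Collect_eq completely_prime_filter_def
proof (intro conjI allI impI ballI)
  show "K \<in> y" if IJ: "I \<in> y" "J \<in> y" and K: "is_glb (Idl \<Omega>) {I, J} K" for I J K
  proof -
    have "I \<in> Idl \<Omega>" "J \<in> Idl \<Omega>"
      using IJ y(1) by blast+
    then have "K = I \<inter> J"
      by (rule is_glb_unique[OF K is_glb_Int[OF L]])
    then show ?thesis
      using Int[OF IJ] by simp
  qed
  show "\<A> \<inter> y \<noteq> {}" if \<A>: "\<A> \<subseteq> Idl \<Omega>" and J: "is_lub (Idl \<Omega>) \<A> J" "J \<in> y" for \<A> J
  proof -
    have "J = ideal_join \<Omega> \<A>"
      by (rule is_lub_unique[OF J(1) is_lub_ideal_join[OF L \<A>]])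
    then show ?thesis
      using join[OF \<A>] J(2) by simp
  qed
  show "J \<in> y" if "I \<in> y" "J \<in> Idl \<Omega>" "I \<subseteq> J" for I J
    by (rule up[OF that])
qed (use y in simp_all)

lemma spec_open_Int:
  assumes "lattice_of_sets \<Omega>" "I \<in> Idl \<Omega>" "J \<in> Idl \<Omega>"
  shows "spec_open \<Omega> I \<inter> spec_open \<Omega> J = spec_open \<Omega> (I \<inter> J)"
  unfolding spec_open_def
  using spec_pointsD(3,4) is_glb_Int[OF assms] assms(2,3) by blast

lemma spec_open_mono: "I \<subseteq> J \<Longrightarrow> J \<in> Idl \<Omega> \<Longrightarrow> spec_open \<Omega> I \<subseteq> spec_open \<Omega> J"
  unfolding spec_open_def using spec_pointsD(3) by blast

lemma spec_open_ideal_join: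
  assumes "lattice_of_sets \<Omega>" "\<A> \<subseteq> Idl \<Omega>"
  shows "spec_open \<Omega> (ideal_join \<Omega> \<A>) = (\<Union>I\<in>\<A>. spec_open \<Omega> I)"
proof
  show "spec_open \<Omega> (ideal_join \<Omega> \<A>) \<subseteq> (\<Union>I\<in>\<A>. spec_open \<Omega> I)"
  proof
    fix y assume "y \<in> spec_open \<Omega> (ideal_join \<Omega> \<A>)"
    then have y: "y \<in> spec_points \<Omega>" "ideal_join \<Omega> \<A> \<in> y"
      unfolding spec_open_def by simp_all
    have "\<A> \<inter> y \<noteq> {}"
      by (rule spec_pointsD(5)[OF y(1) assms(2) is_lub_ideal_join[OF assms] y(2)])
    then show "y \<in> (\<Union>I\<in>\<A>. spec_open \<Omega> I)"
      using y(1) unfolding spec_open_def by blast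
  qed
  show "(\<Union>I\<in>\<A>. spec_open \<Omega> I) \<subseteq> spec_open \<Omega> (ideal_join \<Omega> \<A>)"
    using spec_open_mono[OF ideal_join_upper[OF _ assms(2)] ideal_join_Idl[OF assms(1)]] by blast
qed

lemma spec_open_top:
  assumes "lattice_of_sets \<Omega>"
  shows "spec_open \<Omega> \<Omega> = spec_points \<Omega>"
proof -
  have "\<Omega> \<in> y" if y: "y \<in> spec_points \<Omega>" for y
  proof -
    obtain I where "I \<in> y"
      using spec_pointsD(2)[OF y] by blast
    moreover have "I \<subseteq> \<Omega>"
      using IdlD(1) spec_pointsD(1)[OF y] \<open>I \<in> y\<close> by blast
    ultimately show ?thesis
      using spec_pointsD(3)[OF y _ Idl_top[OF assms]] by blast
  qed
  then show ?thesis
    unfolding spec_open_def by blast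
qed

lemma Union_spec_open:
  assumes "lattice_of_sets \<Omega>" "\<forall>S\<in>\<S>. \<exists>I\<in>Idl \<Omega>. S = spec_open \<Omega> I"
  shows "\<Union>\<S> = spec_open \<Omega> (ideal_join \<Omega> {I \<in> Idl \<Omega>. spec_open \<Omega> I \<in> \<S>})"
proof -
  have "\<Union>\<S> = (\<Union>I\<in>{I \<in> Idl \<Omega>. spec_open \<Omega> I \<in> \<S>}. spec_open \<Omega> I)"
  proof (intro equalityI subsetI)
    fix y assume "y \<in> \<Union>\<S>"
    then obtain S where "S \<in> \<S>" "y \<in> S" by blast
    moreover obtain I where "I \<in> Idl \<Omega>" "S = spec_open \<Omega> I"
      using assms(2) \<open>S \<in> \<S>\<close> by blast
    ultimately show "y \<in> (\<Union>I\<in>{I \<in> Idl \<Omega>. spec_open \<Omega> I \<in> \<S>}. spec_open \<Omega> I)" by blast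
  qed blast
  also have "\<dots> = spec_open \<Omega> (ideal_join \<Omega> {I \<in> Idl \<Omega>. spec_open \<Omega> I \<in> \<S>})"
    by (rule spec_open_ideal_join[symmetric, OF assms(1)]) blast
  finally show ?thesis .
qed

lemma openin_spec_compactification:
  assumes "lattice_of_sets \<Omega>"
  shows "openin (spec_compactification \<Omega>) S \<longleftrightarrow> (\<exists>I\<in>Idl \<Omega>. S = spec_open \<Omega> I)"
proof -
  have "istopology (\<lambda>S. \<exists>I\<in>Idl \<Omega>. S = spec_open \<Omega> I)"
    unfolding istopology_def
  proof (intro conjI allI impI)
    show "\<exists>I\<in>Idl \<Omega>. S \<inter> T = spec_open \<Omega> I"
      if "\<exists>I\<in>Idl \<Omega>. S = spec_open \<Omega> I" "\<exists>I\<in>Idl \<Omega>. T = spec_open \<Omega> I" for S T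
      using that spec_open_Int[OF assms] Idl_Int[OF assms] by blast
    show "\<exists>I\<in>Idl \<Omega>. \<Union>\<S> = spec_open \<Omega> I" if "\<forall>S\<in>\<S>. \<exists>I\<in>Idl \<Omega>. S = spec_open \<Omega> I" for \<S>
      using Union_spec_open[OF assms that] ideal_join_Idl[OF assms] by blast
  qed
  then show ?thesis
    unfolding spec_compactification_def spec_open_def[symmetric] by simp
qed

lemma topspace_spec_compactification:
  assumes "lattice_of_sets \<Omega>"
  shows "topspace (spec_compactification \<Omega>) = spec_points \<Omega>"
proof -
  have "openin (spec_compactification \<Omega>) (spec_open \<Omega> \<Omega>)"
    using openin_spec_compactification[OF assms] Idl_top[OF assms] by blast
  then have "openin (spec_compactification \<Omega>) (spec_points \<Omega>)"
    by (simp only: spec_open_top[OF assms])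
  moreover have "S \<subseteq> spec_points \<Omega>" if "openin (spec_compactification \<Omega>) S" for S
    using that unfolding openin_spec_compactification[OF assms] spec_open_def by blast
  ultimately show ?thesis
    unfolding topspace_def by blast
qed

section \<open>Prime ideals and compactness of the basic open sets\<close>

lemma Idl_Union_chain:
  assumes "\<C> \<subseteq> Idl \<Omega>" "\<C> \<noteq> {}" and chain: "\<And>I J. I \<in> \<C> \<Longrightarrow> J \<in> \<C> \<Longrightarrow> I \<subseteq> J \<or> J \<subseteq> I"
  shows "\<Union>\<C> \<in> Idl \<Omega>"
proof (rule IdlI)
  show "\<Union>\<C> \<subseteq> \<Omega>"
    using assms(1) IdlD(1) by blast
  obtain K where "K \<in> \<C>"
    using assms(2) by blast
  then show "\<Union>\<C> \<noteq> {}"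
    using assms(1) IdlD(2) by blast
  show "V \<in> \<Union>\<C>" if "U \<in> \<Union>\<C>" "V \<in> \<Omega>" "V \<subseteq> U" for U V
    using that assms(1) IdlD(3) by blast
  show "\<exists>W\<in>\<Union>\<C>. U \<subseteq> W \<and> V \<subseteq> W" if "U \<in> \<Union>\<C>" "V \<in> \<Union>\<C>" for U V
  proof -
    obtain I J where "I \<in> \<C>" "U \<in> I" "J \<in> \<C>" "V \<in> J"
      using \<open>U \<in> \<Union>\<C>\<close> \<open>V \<in> \<Union>\<C>\<close> by blast
    then obtain K where K: "K \<in> \<C>" "U \<in> K" "V \<in> K"
      using chain[of I J] by blast
    then show ?thesis
      using IdlD(4)[of K \<Omega> U V] assms(1) by blast
  qed
qed

lemma maximal_ideal_avoiding:
  assumes "J \<in> Idl \<Omega>" "U \<notin> J"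
  obtains M where "M \<in> Idl \<Omega>" "J \<subseteq> M" "U \<notin> M"
    "\<And>K. K \<in> Idl \<Omega> \<Longrightarrow> M \<subseteq> K \<Longrightarrow> U \<notin> K \<Longrightarrow> K = M"
proof -
  let ?\<M> = "{K \<in> Idl \<Omega>. J \<subseteq> K \<and> U \<notin> K}"
  have "\<exists>M\<in>?\<M>. \<forall>K\<in>?\<M>. M \<subseteq> K \<longrightarrow> K = M"
  proof (rule Zorn_Lemma2, rule ballI)
    fix \<C> assume \<C>: "\<C> \<in> chains ?\<M>"
    show "\<exists>M\<in>?\<M>. \<forall>K\<in>\<C>. K \<subseteq> M"
    proof (cases "\<C> = {}")
      case True
      then show ?thesis
        using assms by blast
    next
      case False
      have sub: "\<C> \<subseteq> ?\<M>"
        by (rule chainsD2[OF \<C>])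
      then have "\<Union>\<C> \<in> Idl \<Omega>"
        using Idl_Union_chain[OF _ False chainsD[OF \<C>]] by blast
      moreover have "J \<subseteq> \<Union>\<C>" "U \<notin> \<Union>\<C>"
        using sub False by blast+
      ultimately show ?thesis
        by blast
    qed
  qed
  then obtain M where "M \<in> ?\<M>" "\<forall>K\<in>?\<M>. M \<subseteq> K \<longrightarrow> K = M" ..
  then show ?thesis
    by (intro that) auto
qed

lemma ideal_join_pairE:
  assumes "lattice_of_sets \<Omega>" "I \<in> Idl \<Omega>" "J \<in> Idl \<Omega>" "V \<in> ideal_join \<Omega> {I, J}"
  obtains A B where "A \<in> I" "B \<in> J" "V \<subseteq> A \<union> B"
proof -
  obtain F where F: "finite F" "F \<subseteq> I \<union> J" "V \<subseteq> \<Union>F"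
    using assms(4) by (auto elim: ideal_joinE)
  have "\<Union>(F \<inter> I) \<in> I" "\<Union>(F \<inter> J) \<in> J"
    using Idl_finite_Union_mem[OF assms(1,2), of "F \<inter> I"] Idl_finite_Union_mem[OF assms(1,3), of "F \<inter> J"] F(1)
    by simp_all
  moreover have "V \<subseteq> \<Union>(F \<inter> I) \<union> \<Union>(F \<inter> J)"
    using F(2,3) by blast
  ultimately show ?thesis
    using that by blast
qed

lemma maximal_ideal_avoiding_prime:
  assumes L: "lattice_of_sets \<Omega>" and M: "M \<in> Idl \<Omega>" and U: "U \<in> \<Omega>" "U \<notin> M"
    and max: "\<And>K. K \<in> Idl \<Omega> \<Longrightarrow> M \<subseteq> K \<Longrightarrow> U \<notin> K \<Longrightarrow> K = M"
    and AB: "A \<in> \<Omega>" "B \<in> \<Omega>" "A \<inter> B \<in> M"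
  shows "A \<in> M \<or> B \<in> M"
proof (rule ccontr)
  have escape: "\<exists>m\<in>M. U \<subseteq> C \<union> m" if C: "C \<in> \<Omega>" "C \<notin> M" for C
  proof -
    \<comment> \<open>the join of \<open>M\<close> and \<open>\<down>C\<close> properly extends \<open>M\<close>, so by maximality it contains \<open>U\<close>\<close>
    let ?K = "ideal_join \<Omega> {M, principal_ideal \<Omega> C}"
    have "C \<in> principal_ideal \<Omega> C"
      using C(1) unfolding principal_ideal_def by blast
    then have "C \<in> ?K"
      using ideal_join_upper[of "principal_ideal \<Omega> C" "{M, principal_ideal \<Omega> C}" \<Omega>]
        M principal_ideal_Idl[OF L] by blast
    then have "U \<in> ?K"
      using max[OF ideal_join_Idl[OF L]] ideal_join_upper[of M "{M, principal_ideal \<Omega> C}" \<Omega>]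
        M principal_ideal_Idl[OF L] C(2) by blast
    then obtain m c where "m \<in> M" "c \<in> principal_ideal \<Omega> C" "U \<subseteq> m \<union> c"
      by (rule ideal_join_pairE[OF L M principal_ideal_Idl[OF L]])
    then show ?thesis
      unfolding principal_ideal_def by blast
  qed
  assume "\<not> (A \<in> M \<or> B \<in> M)"
  then obtain m1 m2 where m: "m1 \<in> M" "U \<subseteq> A \<union> m1" "m2 \<in> M" "U \<subseteq> B \<union> m2"
    using escape AB(1,2) by meson
  have "(A \<inter> B) \<union> m1 \<union> m2 \<in> M"
    using Idl_Un_mem[OF L M] AB(3) m(1,3) by blast
  moreover have "U \<subseteq> (A \<inter> B) \<union> m1 \<union> m2"
    using m(2,4) by blast
  ultimately show False
    using IdlD(3)[OF M _ U(1)] U(2) by blast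
qed

lemma prime_ideal_complement_spec_point:
  assumes L: "lattice_of_sets \<Omega>" and M: "M \<in> Idl \<Omega>" "M \<noteq> \<Omega>"
    and prime: "\<And>A B. A \<in> \<Omega> \<Longrightarrow> B \<in> \<Omega> \<Longrightarrow> A \<inter> B \<in> M \<Longrightarrow> A \<in> M \<or> B \<in> M"
  shows "{K \<in> Idl \<Omega>. \<not> K \<subseteq> M} \<in> spec_points \<Omega>"
proof (rule spec_pointsI[OF L])
  show "{K \<in> Idl \<Omega>. \<not> K \<subseteq> M} \<noteq> {}"
    using Idl_top[OF L] IdlD(1)[OF M(1)] M(2) by blast
  show "I \<inter> J \<in> {K \<in> Idl \<Omega>. \<not> K \<subseteq> M}"
    if IJ: "I \<in> {K \<in> Idl \<Omega>. \<not> K \<subseteq> M}" "J \<in> {K \<in> Idl \<Omega>. \<not> K \<subseteq> M}" for I J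
  proof -
    obtain A B where A: "A \<in> I" "A \<notin> M" and B: "B \<in> J" "B \<notin> M"
      and I: "I \<in> Idl \<Omega>" and J: "J \<in> Idl \<Omega>"
      using IJ by blast
    have "A \<in> \<Omega>" "B \<in> \<Omega>"
      using IdlD(1)[OF I] IdlD(1)[OF J] A(1) B(1) by blast+
    then have AB: "A \<inter> B \<in> \<Omega>" "A \<inter> B \<notin> M"
      using lattice_of_setsD(3)[OF L] prime A(2) B(2) by blast+
    have "A \<inter> B \<in> I \<inter> J"
      using IdlD(3)[OF I A(1) AB(1)] IdlD(3)[OF J B(1) AB(1)] by blast
    then show ?thesis
      using Idl_Int[OF L I J] AB(2) by blast
  qed
  show "\<A> \<inter> {K \<in> Idl \<Omega>. \<not> K \<subseteq> M} \<noteq> {}"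
    if "\<A> \<subseteq> Idl \<Omega>" "ideal_join \<Omega> \<A> \<in> {K \<in> Idl \<Omega>. \<not> K \<subseteq> M}" for \<A>
    using ideal_join_least[OF L M(1), of \<A>] that by blast
qed auto

lemma spec_open_principal_subset_imp_mem:
  assumes L: "lattice_of_sets \<Omega>" and J: "J \<in> Idl \<Omega>" and U: "U \<in> \<Omega>"
    and sub: "spec_open \<Omega> (principal_ideal \<Omega> U) \<subseteq> spec_open \<Omega> J"
  shows "U \<in> J"
proof (rule ccontr)
  assume "U \<notin> J"
  then obtain M where M: "M \<in> Idl \<Omega>" "J \<subseteq> M" "U \<notin> M"
    and max: "\<And>K. K \<in> Idl \<Omega> \<Longrightarrow> M \<subseteq> K \<Longrightarrow> U \<notin> K \<Longrightarrow> K = M"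
    by (rule maximal_ideal_avoiding[OF J]) blast
  define y where "y = {K \<in> Idl \<Omega>. \<not> K \<subseteq> M}"
  have "y \<in> spec_points \<Omega>"
    unfolding y_def
    using prime_ideal_complement_spec_point[OF L M(1)] maximal_ideal_avoiding_prime[OF L M(1) U M(3) max]
      U M(3) by blast
  moreover have "principal_ideal \<Omega> U \<in> y"
    using principal_ideal_Idl[OF L] U M(3) unfolding y_def principal_ideal_def by blast
  ultimately have "J \<in> y"
    using sub unfolding spec_open_def by blast
  then show False
    using M(2) unfolding y_def by blast
qed

section \<open>Core-compactness\<close>

lemma way_below_open_imp_subset:
  assumes "openin Y V" "way_below_open Y U V"
  shows "U \<subseteq> V"
proof -
  have "\<exists>D\<in>{V}. U \<subseteq> D"
    using assms(2)[unfolded way_below_open_def, rule_format, of "{V}"] assms(1) by simp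
  then show ?thesis
    by simp
qed

lemma directed_finite_bound:
  assumes "finite \<F>" "\<F> \<subseteq> \<D>" "\<D> \<noteq> {}"
    and directed: "\<forall>D1\<in>\<D>. \<forall>D2\<in>\<D>. \<exists>D3\<in>\<D>. D1 \<subseteq> D3 \<and> D2 \<subseteq> D3"
  shows "\<exists>E\<in>\<D>. \<Union>\<F> \<subseteq> E"
  using assms(1,2)
proof (induction \<F> rule: finite_induct)
  case empty
  then show ?case
    using assms(3) by blast
next
  case (insert F \<F>)
  then have "F \<in> \<D>" "\<F> \<subseteq> \<D>"
    by simp_all
  obtain E where "E \<in> \<D>" "\<Union>\<F> \<subseteq> E"
    using insert.IH[OF \<open>\<F> \<subseteq> \<D>\<close>] by (rule bexE)
  moreover obtain E' where "E' \<in> \<D>" "F \<subseteq> E'" "E \<subseteq> E'"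
    using directed[rule_format, OF \<open>F \<in> \<D>\<close> \<open>E \<in> \<D>\<close>] by (rule bexE) (elim conjE)
  ultimately show ?case
    by auto
qed

lemma compactin_imp_way_below_open:
  assumes "compactin Y K" "K \<subseteq> V"
  shows "way_below_open Y K V"
  unfolding way_below_open_def
proof (intro allI impI, elim conjE)
  fix \<D> assume \<D>: "\<forall>D\<in>\<D>. openin Y D" "\<D> \<noteq> {}"
    "\<forall>D1\<in>\<D>. \<forall>D2\<in>\<D>. \<exists>D3\<in>\<D>. D1 \<subseteq> D3 \<and> D2 \<subseteq> D3" "V \<subseteq> \<Union>\<D>"
  have "K \<subseteq> \<Union>\<D>"
    using assms(2) \<D>(4) by (rule order_trans)
  then obtain \<F> where \<F>: "finite \<F>" "\<F> \<subseteq> \<D>" "K \<subseteq> \<Union>\<F>"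
    using assms(1) \<D>(1) unfolding compactin_def by meson
  obtain E where "E \<in> \<D>" "\<Union>\<F> \<subseteq> E"
    using directed_finite_bound[OF \<F>(1,2) \<D>(2,3)] by (rule bexE)
  moreover have "K \<subseteq> E"
    using \<F>(3) \<open>\<Union>\<F> \<subseteq> E\<close> by (rule order_trans)
  ultimately show "\<exists>D\<in>\<D>. K \<subseteq> D"
    by blast
qed

lemma core_compactI_compact_opens:
  assumes "\<And>V y. openin Y V \<Longrightarrow> y \<in> V \<Longrightarrow> \<exists>K. openin Y K \<and> compactin Y K \<and> y \<in> K \<and> K \<subseteq> V"
  shows "core_compact Y"
  unfolding core_compact_def
proof (intro allI impI equalityI subsetI)
  fix V y
  assume "openin Y V" "y \<in> V"
  then obtain K where "openin Y K" "compactin Y K" "y \<in> K" "K \<subseteq> V"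
    using assms by blast
  then show "y \<in> \<Union>{U. openin Y U \<and> way_below_open Y U V}"
    using compactin_imp_way_below_open by blast
next
  fix V y
  assume "openin Y V" "y \<in> \<Union>{U. openin Y U \<and> way_below_open Y U V}"
  then show "y \<in> V"
    using way_below_open_imp_subset by blast
qed

lemma compactin_spec_open_principal:
  assumes L: "lattice_of_sets \<Omega>" and U: "U \<in> \<Omega>"
  shows "compactin (spec_compactification \<Omega>) (spec_open \<Omega> (principal_ideal \<Omega> U))"
  unfolding compactin_def
proof (intro conjI allI impI; (elim conjE)?)
  show "spec_open \<Omega> (principal_ideal \<Omega> U) \<subseteq> topspace (spec_compactification \<Omega>)"
    unfolding topspace_spec_compactification[OF L] spec_open_def by blast
  fix \<S> assume \<S>: "\<forall>S\<in>\<S>. openin (spec_compactification \<Omega>) S"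
    "spec_open \<Omega> (principal_ideal \<Omega> U) \<subseteq> \<Union>\<S>"
  let ?\<A> = "{I \<in> Idl \<Omega>. spec_open \<Omega> I \<in> \<S>}"
  have "\<Union>\<S> = spec_open \<Omega> (ideal_join \<Omega> ?\<A>)"
    using \<S>(1) unfolding openin_spec_compactification[OF L] by (rule Union_spec_open[OF L])
  then have "U \<in> ideal_join \<Omega> ?\<A>"
    using spec_open_principal_subset_imp_mem[OF L ideal_join_Idl[OF L] U] \<S>(2) by simp
  then obtain \<A>' where \<A>': "finite \<A>'" "\<A>' \<subseteq> ?\<A>" "U \<in> ideal_join \<Omega> \<A>'"
    by (rule ideal_join_finite_subfamily)
  have "spec_open \<Omega> (principal_ideal \<Omega> U) \<subseteq> spec_open \<Omega> (ideal_join \<Omega> \<A>')"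
    using principal_ideal_subset[OF ideal_join_Idl[OF L] \<A>'(3)]
    by (rule spec_open_mono[OF _ ideal_join_Idl[OF L]])
  also have "\<dots> = \<Union>(spec_open \<Omega> ` \<A>')"
    using \<A>'(2) by (intro spec_open_ideal_join[OF L]) blast
  finally show "\<exists>\<F>. finite \<F> \<and> \<F> \<subseteq> \<S> \<and> spec_open \<Omega> (principal_ideal \<Omega> U) \<subseteq> \<Union>\<F>"
    using \<A>'(1,2) by (intro exI[where x = "spec_open \<Omega> ` \<A>'"]) auto
qed

lemma spec_open_eq_Union_principal:
  assumes L: "lattice_of_sets \<Omega>" and I: "I \<in> Idl \<Omega>"
  shows "spec_open \<Omega> I = (\<Union>U\<in>I. spec_open \<Omega> (principal_ideal \<Omega> U))"
proof
  have PI: "principal_ideal \<Omega> ` I \<subseteq> Idl \<Omega>"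
    using principal_ideal_Idl[OF L] by blast
  have "I \<subseteq> ideal_join \<Omega> (principal_ideal \<Omega> ` I)"
    using ideal_join_upper[OF _ PI] IdlD(1)[OF I] unfolding principal_ideal_def by blast
  then have "spec_open \<Omega> I \<subseteq> spec_open \<Omega> (ideal_join \<Omega> (principal_ideal \<Omega> ` I))"
    by (rule spec_open_mono[OF _ ideal_join_Idl[OF L]])
  then show "spec_open \<Omega> I \<subseteq> (\<Union>U\<in>I. spec_open \<Omega> (principal_ideal \<Omega> U))"
    by (simp add: spec_open_ideal_join[OF L PI])
  show "(\<Union>U\<in>I. spec_open \<Omega> (principal_ideal \<Omega> U)) \<subseteq> spec_open \<Omega> I"
    using spec_open_mono[OF principal_ideal_subset[OF I] I] by blast
qed

lemma core_compact_spec_compactification: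
  assumes L: "lattice_of_sets \<Omega>"
  shows "core_compact (spec_compactification \<Omega>)"
proof (rule core_compactI_compact_opens)
  fix V y
  assume "openin (spec_compactification \<Omega>) V" "y \<in> V"
  then obtain I where I: "I \<in> Idl \<Omega>" "V = spec_open \<Omega> I"
    using openin_spec_compactification[OF L] by blast
  then obtain U where U: "U \<in> I" "y \<in> spec_open \<Omega> (principal_ideal \<Omega> U)"
    using \<open>y \<in> V\<close> spec_open_eq_Union_principal[OF L I(1)] by blast
  show "\<exists>K. openin (spec_compactification \<Omega>) K \<and> compactin (spec_compactification \<Omega>) K \<and> y \<in> K \<and> K \<subseteq> V"
  proof (intro exI conjI)
    show "openin (spec_compactification \<Omega>) (spec_open \<Omega> (principal_ideal \<Omega> U))"
      using openin_spec_compactification[OF L] principal_ideal_Idl[OF L] by blast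
    show "compactin (spec_compactification \<Omega>) (spec_open \<Omega> (principal_ideal \<Omega> U))"
      using compactin_spec_open_principal[OF L] IdlD(1)[OF I(1)] U(1) by blast
    show "spec_open \<Omega> (principal_ideal \<Omega> U) \<subseteq> V"
      using spec_open_eq_Union_principal[OF L I(1)] U(1) I(2) by blast
  qed (rule U(2))
qed

section \<open>The embedding\<close>

lemma iota_mem_spec_points:
  assumes L: "lattice_of_sets \<Omega>" and x: "x \<in> \<Union>\<Omega>"
  shows "iota \<Omega> x \<in> spec_points \<Omega>"
proof (rule spec_pointsI[OF L])
  show "iota \<Omega> x \<subseteq> Idl \<Omega>"
    unfolding iota_def by blast
  show "iota \<Omega> x \<noteq> {}"
    using Idl_top[OF L] x unfolding iota_def by blast
  show "J \<in> iota \<Omega> x" if "I \<in> iota \<Omega> x" "J \<in> Idl \<Omega>" "I \<subseteq> J" for I J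
    using that unfolding iota_def by blast
  show "I \<inter> J \<in> iota \<Omega> x" if IJ: "I \<in> iota \<Omega> x" "J \<in> iota \<Omega> x" for I J
  proof -
    obtain U V where I: "I \<in> Idl \<Omega>" "U \<in> I" "x \<in> U" and J: "J \<in> Idl \<Omega>" "V \<in> J" "x \<in> V"
      using IJ unfolding iota_def by blast
    have UV: "U \<inter> V \<in> \<Omega>"
      using lattice_of_setsD(3)[OF L] IdlD(1)[OF I(1)] IdlD(1)[OF J(1)] I(2) J(2) by blast
    have "U \<inter> V \<in> I \<inter> J"
      using IdlD(3)[OF I(1,2) UV] IdlD(3)[OF J(1,2) UV] by blast
    moreover have "x \<in> U \<inter> V"
      using I(3) J(3) by blast
    ultimately have "x \<in> \<Union>(I \<inter> J)"
      by (rule UnionI)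
    then show ?thesis
      using Idl_Int[OF L I(1) J(1)] unfolding iota_def by blast
  qed
  show "\<A> \<inter> iota \<Omega> x \<noteq> {}" if \<A>: "\<A> \<subseteq> Idl \<Omega>" "ideal_join \<Omega> \<A> \<in> iota \<Omega> x" for \<A>
  proof -
    obtain V where V: "V \<in> ideal_join \<Omega> \<A>" "x \<in> V"
      using \<A>(2) unfolding iota_def by blast
    obtain F where F: "F \<subseteq> \<Union>\<A>" "V \<subseteq> \<Union>F"
      using V(1) by (rule ideal_joinE)
    obtain f where "f \<in> F" "x \<in> f"
      using subsetD[OF F(2) V(2)] by (rule UnionE)
    moreover obtain I where "I \<in> \<A>" "f \<in> I"
      using subsetD[OF F(1) \<open>f \<in> F\<close>] by (rule UnionE)
    ultimately have "I \<in> \<A> \<inter> iota \<Omega> x"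
      using \<A>(1) unfolding iota_def by blast
    then show ?thesis
      by blast
  qed
qed

lemma iota_mem_spec_open_iff:
  assumes "lattice_of_sets \<Omega>" "x \<in> \<Union>\<Omega>" "I \<in> Idl \<Omega>"
  shows "iota \<Omega> x \<in> spec_open \<Omega> I \<longleftrightarrow> x \<in> \<Union>I"
  using iota_mem_spec_points[OF assms(1,2)] assms(3) unfolding spec_open_def by (simp add: iota_def)

lemma Union_nonempty_if_mem_spec_point:
  assumes "lattice_of_sets \<Omega>" "y \<in> spec_points \<Omega>" "I \<in> y"
  shows "\<Union>I \<noteq> {}"
proof
  assume "\<Union>I = {}"
  then have "I \<subseteq> K" if "K \<in> Idl \<Omega>" for K
    using Idl_empty_mem[OF assms(1) that] by (auto simp: Union_empty_conv)
  then have "is_lub (Idl \<Omega>) {} I"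
    using spec_pointsD(1)[OF assms(2)] assms(3) unfolding is_lub_def by blast
  then show False
    using spec_pointsD(5)[OF assms(2) empty_subsetI _ assms(3)] by simp
qed

lemma Union_viable_base:
  assumes "viable_base X \<Omega>"
  shows "\<Union>\<Omega> = topspace X"
proof
  show "\<Union>\<Omega> \<subseteq> topspace X"
    using assms unfolding viable_base_def by (auto dest: openin_subset)
  show "topspace X \<subseteq> \<Union>\<Omega>"
    using assms unfolding viable_base_def by (intro Union_upper) simp
qed

lemma Union_principal_ideal_open:
  assumes "viable_base X \<Omega>" "openin X W"
  shows "\<Union>(principal_ideal \<Omega> W) = W"
proof
  show "\<Union>(principal_ideal \<Omega> W) \<subseteq> W"
    unfolding principal_ideal_def by (rule Union_least) simp
  obtain \<U> where \<U>: "\<U> \<subseteq> \<Omega>" "W = \<Union>\<U>"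
    using assms unfolding viable_base_def by blast
  then have "\<U> \<subseteq> principal_ideal \<Omega> W"
    unfolding principal_ideal_def by (auto intro: Union_upper)
  then show "W \<subseteq> \<Union>(principal_ideal \<Omega> W)"
    unfolding \<U>(2) by (rule Union_mono)
qed

lemma inj_on_iota:
  assumes "t0_space X" "viable_base X \<Omega>"
  shows "inj_on (iota \<Omega>) (topspace X)"
proof (rule inj_onI, rule ccontr)
  fix x y
  assume x: "x \<in> topspace X" and y: "y \<in> topspace X" and eq: "iota \<Omega> x = iota \<Omega> y" and "x \<noteq> y"
  then obtain W where W: "openin X W" "x \<notin> W \<longleftrightarrow> y \<in> W"
    using assms(1) unfolding t0_space_def by blast
  have L: "lattice_of_sets \<Omega>"
    using viable_base_imp_lattice_of_sets[OF assms(2)] .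
  have "x \<in> \<Union>(principal_ideal \<Omega> W) \<longleftrightarrow> y \<in> \<Union>(principal_ideal \<Omega> W)"
    using iota_mem_spec_open_iff[OF L _ principal_ideal_Idl[OF L]] eq x y Union_viable_base[OF assms(2)]
    by metis
  then show False
    using W Union_principal_ideal_open[OF assms(2) W(1)] by simp
qed

lemma continuous_map_iota:
  assumes "viable_base X \<Omega>"
  shows "continuous_map X (spec_compactification \<Omega>) (iota \<Omega>)"
  unfolding continuous_map
proof (intro conjI allI impI)
  have L: "lattice_of_sets \<Omega>" and X: "\<Union>\<Omega> = topspace X"
    using viable_base_imp_lattice_of_sets Union_viable_base assms by blast+
  show "iota \<Omega> ` topspace X \<subseteq> topspace (spec_compactification \<Omega>)"
    using iota_mem_spec_points[OF L] topspace_spec_compactification[OF L] X by blast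
  fix V assume "openin (spec_compactification \<Omega>) V"
  then obtain I where I: "I \<in> Idl \<Omega>" "V = spec_open \<Omega> I"
    using openin_spec_compactification[OF L] by blast
  have "{x \<in> topspace X. iota \<Omega> x \<in> V} = \<Union>I"
    using iota_mem_spec_open_iff[OF L _ I(1)] IdlD(1)[OF I(1)] I(2) X by blast
  moreover have "openin X (\<Union>I)"
    using assms IdlD(1)[OF I(1)] unfolding viable_base_def by (intro openin_Union) blast
  ultimately show "openin X {x \<in> topspace X. iota \<Omega> x \<in> V}"
    by simp
qed

lemma open_map_iota:
  assumes "viable_base X \<Omega>"
  shows "open_map X (subtopology (spec_compactification \<Omega>) (iota \<Omega> ` topspace X)) (iota \<Omega>)"
  unfolding open_map_def openin_subtopology
proof (intro allI impI)
  have L: "lattice_of_sets \<Omega>" and X: "\<Union>\<Omega> = topspace X"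
    using viable_base_imp_lattice_of_sets Union_viable_base assms by blast+
  fix W assume W: "openin X W"
  have "iota \<Omega> x \<in> spec_open \<Omega> (principal_ideal \<Omega> W) \<longleftrightarrow> x \<in> W" if "x \<in> topspace X" for x
    using iota_mem_spec_open_iff[OF L _ principal_ideal_Idl[OF L], of x W] that X
      Union_principal_ideal_open[OF assms W] by simp
  then have "iota \<Omega> ` W = spec_open \<Omega> (principal_ideal \<Omega> W) \<inter> iota \<Omega> ` topspace X"
    using openin_subset[OF W] by auto
  moreover have "openin (spec_compactification \<Omega>) (spec_open \<Omega> (principal_ideal \<Omega> W))"
    using openin_spec_compactification[OF L] principal_ideal_Idl[OF L] by blast
  ultimately show "\<exists>T. openin (spec_compactification \<Omega>) T \<and> iota \<Omega> ` W = T \<inter> iota \<Omega> ` topspace X"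
    by blast
qed

lemma dense_iota_image:
  assumes "viable_base X \<Omega>"
  shows "spec_compactification \<Omega> closure_of (iota \<Omega> ` topspace X) = topspace (spec_compactification \<Omega>)"
  unfolding dense_intersects_open
proof (intro allI impI, elim conjE)
  have L: "lattice_of_sets \<Omega>" and X: "\<Union>\<Omega> = topspace X"
    using viable_base_imp_lattice_of_sets Union_viable_base assms by blast+
  fix T assume "openin (spec_compactification \<Omega>) T" "T \<noteq> {}"
  then obtain I y where I: "I \<in> Idl \<Omega>" "T = spec_open \<Omega> I" and y: "y \<in> spec_points \<Omega>" "I \<in> y"
    using openin_spec_compactification[OF L] unfolding spec_open_def by blast
  then obtain x where x: "x \<in> \<Union>I"
    using Union_nonempty_if_mem_spec_point[OF L y] by blast
  then have "x \<in> topspace X"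
    using IdlD(1)[OF I(1)] X by blast
  then show "iota \<Omega> ` topspace X \<inter> T \<noteq> {}"
    using iota_mem_spec_open_iff[OF L _ I(1)] x I(2) X by blast
qed

theorem mainTheorem15:
  fixes X :: "'a topology" and \<Omega> :: "'a set set"
  assumes "t0_space X" and "viable_base X \<Omega>"
  shows "core_compact (spec_compactification \<Omega>)
    \<and> iota \<Omega> ` topspace X \<subseteq> topspace (spec_compactification \<Omega>)
    \<and> embedding_map X (spec_compactification \<Omega>) (iota \<Omega>)
    \<and> (spec_compactification \<Omega>) closure_of (iota \<Omega> ` topspace X)
        = topspace (spec_compactification \<Omega>)"
proof (intro conjI)
  show "core_compact (spec_compactification \<Omega>)"
    by (rule core_compact_spec_compactification[OF viable_base_imp_lattice_of_sets[OF assms(2)]])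
  have cont: "continuous_map X (spec_compactification \<Omega>) (iota \<Omega>)"
    by (rule continuous_map_iota[OF assms(2)])
  then show "iota \<Omega> ` topspace X \<subseteq> topspace (spec_compactification \<Omega>)"
    by (rule continuous_map_image_subset_topspace)
  have "embedding_map X (subtopology (spec_compactification \<Omega>) (iota \<Omega> ` topspace X)) (iota \<Omega>)"
    using cont open_map_iota[OF assms(2)] inj_on_iota[OF assms]
    by (intro injective_open_imp_embedding_map) (simp_all add: continuous_map_in_subtopology)
  then show "embedding_map X (spec_compactification \<Omega>) (iota \<Omega>)"
    by (simp add: embedding_map_in_subtopology)
  show "spec_compactification \<Omega> closure_of (iota \<Omega> ` topspace X) = topspace (spec_compactification \<Omega>)"
    by (rule dense_iota_image[OF assms(2)])
qed

end
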